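(* Let $f:\mathbb{R}^d\to\mathbb{R}$ and $P:\mathbb{R}^d\to\mathbb{R}^s$ be continuously differentiable, $D\subseteq\mathbb{R}^s$ closed, $\Omega=\{z\mid P(z)\in D\}$, and let $\bar z\in\Omega$ be B-stationary for the problem $\min f(z)$ s.t. $P(z)\in D$. Assume that GGCQ holds at $\bar z$ and that the mapping $u\rightrightarrows\nabla P(\bar z)u-T_D(P(\bar z))$ is metrically subregular at $(0,0)$. Consider the program \[\min_{(u,y)\in\mathbb{R}^d\times\mathbb{R}^s}\ \langle\nabla f(\bar z),u\rangle+\tfrac12\|y\|^2\quad\text{subject to}\quad\nabla P(\bar z)u+y\in T_D(P(\bar z)).\tag{A}\] Then: the mapping $(u,y)\rightrightarrows\nabla P(\bar z)u+y-T_D(P(\bar z))$ is metrically subregular at $((\bar u,\bar y),0)$ for every point $(\bar u,\bar y)$ feasible for (A); the program (A) is bounded below; and for every B-stationary solution $(\bar u,\bar y)$ of (A) there is a multiplier $w^\ast\in\widehat N_{T_D(P(\bar z))}(\nabla P(\bar z)\bar u+\bar y)$ such that \[\nabla f(\bar z)+\nabla P(\bar z)^\ast w^\ast=0,\qquad\bar y+w^\ast=0.\]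
   Context: Tangent cone $T_\Omega(\bar z)=\{w\mid \exists t_k\downarrow0,\ w_k\to w,\ \bar z+t_kw_k\in\Omega\}$; polar cone $K^\ast=\{z^\ast\mid\langle z^\ast,w\rangle\le0\ \forall w\in K\}$; regular normal cone $\widehat N_\Omega(\bar z)=(T_\Omega(\bar z))^\ast$. Linearized tangent cone $T^{\rm lin}_{P,D}(\bar z)=\{u\mid\nabla P(\bar z)u\in T_D(P(\bar z))\}$. For a problem of minimizing a $C^1$ function $h$ over a closed set $S$, a feasible point $\bar x$ is B-stationary if $0\in\nabla h(\bar x)+\widehat N_S(\bar x)$. GGCQ holds at $\bar z$ if $\widehat N_\Omega(\bar z)=(T^{\rm lin}_{P,D}(\bar z))^\ast$. A mapping $M$ is metrically subregular at $(\bar z,\bar w)\in\operatorname{gph}M$ if there are a neighborhood $W$ of $\bar z$ and $\kappa>0$ with $\operatorname{dist}(z,M^{-1}(\bar w))\le\kappa\operatorname{dist}(\bar w,M(z))$ for $z\in W$. *)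

theory Defs
  imports "HOL-Analysis.Analysis"
begin

definition tangent_cone :: "'a::real_normed_vector set \<Rightarrow> 'a \<Rightarrow> 'a set" where
  "tangent_cone \<Omega> z = {w. \<exists>t u. (\<forall>k. t k > 0) \<and> t \<longlonglongrightarrow> 0 \<and> u \<longlonglongrightarrow> w
                                \<and> (\<forall>k. z + t k *\<^sub>R u k \<in> \<Omega>)}"

definition polar_cone :: "'a::real_inner set \<Rightarrow> 'a set" where
  "polar_cone K = {v. \<forall>w\<in>K. inner v w \<le> 0}"

definition regular_normal_cone :: "'a::real_inner set \<Rightarrow> 'a \<Rightarrow> 'a set" where
  "regular_normal_cone \<Omega> z = polar_cone (tangent_cone \<Omega> z)"

text \<open>Linearized tangent cone of {z. P z \<in> D} at z, given the derivative DPz = \<nabla>P(z).\<close>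
definition lin_tangent_cone :: "('a::real_normed_vector \<Rightarrow> 'b::real_normed_vector) \<Rightarrow> 'b set \<Rightarrow> 'b \<Rightarrow> 'a set" where
  "lin_tangent_cone DPz D Pz = {u. DPz u \<in> tangent_cone D Pz}"

definition b_stationary :: "('a::real_inner \<Rightarrow> real) \<Rightarrow> 'a set \<Rightarrow> 'a \<Rightarrow> bool" where
  "b_stationary h S x \<longleftrightarrow> x \<in> S \<and>
     (\<exists>g. (GDERIV h x :> g) \<and> 0 \<in> (\<lambda>n. g + n) ` regular_normal_cone S x)"

text \<open>Metric subregularity of a set-valued map M at (zb, wb) in its graph.
  If M z is empty, dist(wb, M z) = +\<infinity> and the inequality is vacuous.\<close>
definition metrically_subregular :: "('a::metric_space \<Rightarrow> 'b::metric_space set) \<Rightarrow> 'a \<Rightarrow> 'b \<Rightarrow> bool" where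
  "metrically_subregular M zb wb \<longleftrightarrow> wb \<in> M zb \<and>
     (\<exists>W \<kappa>. open W \<and> zb \<in> W \<and> \<kappa> > 0 \<and>
        (\<forall>z\<in>W. M z \<noteq> {} \<longrightarrow> infdist z {x. wb \<in> M x} \<le> \<kappa> * infdist wb (M z)))"

end

theory Submission
  imports Defs
begin

text \<open>Write \<open>A = \<nabla>P(zb)\<close> and \<open>T = T_D(P(zb))\<close>. Any residual of the constraint
  \<open>A u + y \<in> T\<close> is cancelled by moving the slack \<open>y\<close> alone, which gives subregularity with
  modulus 1, and the tangent directions of the feasible set at a feasible point include every
  \<open>(h, d - A h)\<close> with \<open>d\<close> tangent to \<open>T\<close>;
  B-stationarity along these directions yields the multiplier \<open>w = - yb\<close>.
  For the lower bound, B-stationarity and GGCQ give \<open>\<langle>\<nabla>f(zb), v\<rangle> \<ge> 0\<close> whenever \<open>A v \<in> T\<close>,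
  and subregularity at 0, which extends from a neighbourhood to all of space because \<open>T\<close> is a
  cone, gives \<open>dist(u, A\<inverse>T) \<le> \<kappa> \<parallel>y\<parallel>\<close> on the feasible set. So the objective is at least
  \<open>- \<parallel>\<nabla>f(zb)\<parallel> (\<kappa> \<parallel>y\<parallel> + 1) + \<parallel>y\<parallel>\<^sup>2 / 2\<close>, which is bounded below.\<close>

lemma GDERIV_unique:
  assumes "GDERIV f x :> a" and "GDERIV f x :> b"
  shows "a = b"
proof -
  have "(\<lambda>h. inner h a) = (\<lambda>h. inner h b)"
    using assms unfolding gderiv_def by (rule has_derivative_unique)
  then have "inner (a - b) (a - b) = 0"
    by (metis inner_diff_right right_minus_eq)
  then show ?thesis by simp
qed

lemma infdist_le_scaled_infdist:
  assumes "k > 0" and "B \<noteq> {}" and "\<And>b. b \<in> B \<Longrightarrow> \<exists>a\<in>A. dist x a \<le> k * dist y b"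
  shows "infdist x A \<le> k * infdist y B"
proof -
  have "infdist x A / k \<le> dist y b" if b: "b \<in> B" for b
  proof -
    obtain a where "a \<in> A" and "dist x a \<le> k * dist y b" using assms(3)[OF b] by blast
    then have "infdist x A \<le> k * dist y b" using infdist_le order_trans by blast
    then show ?thesis using \<open>k > 0\<close> by (simp add: pos_divide_le_eq mult.commute)
  qed
  then have "infdist x A / k \<le> infdist y B"
    using \<open>B \<noteq> {}\<close> by (simp add: infdist_notempty cINF_greatest)
  then show ?thesis using \<open>k > 0\<close> by (simp add: pos_divide_le_eq mult.commute)
qed

lemma infdist_lessE:
  assumes "A \<noteq> {}" and "infdist x A < d"
  obtains a where "a \<in> A" and "dist x a < d"
  using assms by (auto simp: infdist_notempty cINF_less_iff)

lemma zero_in_tangent_cone: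
  assumes "z \<in> \<Omega>"
  shows "0 \<in> tangent_cone \<Omega> z"
  unfolding tangent_cone_def
  using assms LIMSEQ_inverse_real_of_nat
  by (intro CollectI exI[of _ "\<lambda>k. inverse (real (Suc k))"] exI[of _ "\<lambda>k. 0"]) auto

lemma tangent_cone_scaleR:
  assumes "w \<in> tangent_cone \<Omega> z" and "c > 0"
  shows "c *\<^sub>R w \<in> tangent_cone \<Omega> z"
proof -
  obtain t u where t: "\<forall>k. t k > 0" "t \<longlonglongrightarrow> 0" and u: "u \<longlonglongrightarrow> w"
    and mem: "\<forall>k. z + t k *\<^sub>R u k \<in> \<Omega>"
    using assms(1) unfolding tangent_cone_def by blast
  have "(\<lambda>k. t k / c) \<longlonglongrightarrow> 0" using tendsto_divide_zero[OF t(2)] .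
  moreover have "(\<lambda>k. c *\<^sub>R u k) \<longlonglongrightarrow> c *\<^sub>R w" by (intro tendsto_intros u)
  moreover have "z + (t k / c) *\<^sub>R (c *\<^sub>R u k) \<in> \<Omega>" for k
    using mem \<open>c > 0\<close> by simp
  ultimately show ?thesis
    using t(1) \<open>c > 0\<close> unfolding tangent_cone_def
    by (intro CollectI exI[of _ "\<lambda>k. t k / c"] exI[of _ "\<lambda>k. c *\<^sub>R u k"]) simp
qed

lemma b_stationary_neg_gradient_in_normal_cone:
  assumes "b_stationary h S x" and "GDERIV h x :> g"
  shows "- g \<in> regular_normal_cone S x"
proof -
  obtain g' n where "GDERIV h x :> g'" and "n \<in> regular_normal_cone S x" and "g' + n = 0"
    using assms(1) unfolding b_stationary_def by (metis imageE)
  moreover have "g' = g" using GDERIV_unique \<open>GDERIV h x :> g'\<close> assms(2) .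
  ultimately show ?thesis by (metis add.commute eq_neg_iff_add_eq_0)
qed

lemma metrically_subregular_slack_residual:
  fixes A :: "'a::real_normed_vector \<Rightarrow> 'b::real_normed_vector"
  assumes "A ub + yb \<in> T"
  shows "metrically_subregular (\<lambda>(u, y). (\<lambda>t. A u + y - t) ` T) (ub, yb) 0"
  unfolding metrically_subregular_def
proof (intro conjI exI[of _ UNIV] exI[of _ 1] ballI impI)
  show "0 \<in> (case (ub, yb) of (u, y) \<Rightarrow> (\<lambda>t. A u + y - t) ` T)"
    using assms by force
next
  fix z :: "'a \<times> 'b"
  obtain u y where z: "z = (u, y)" by fastforce
  assume "(case z of (u, y) \<Rightarrow> (\<lambda>t. A u + y - t) ` T) \<noteq> {}"
  then have ne: "(\<lambda>t. A u + y - t) ` T \<noteq> {}" by (simp add: z)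
  \<comment> \<open>Every residual \<open>A u + y - t\<close> is removed by changing only the slack \<open>y\<close>.\<close>
  have "infdist (u, y) {x. 0 \<in> (case x of (u, y) \<Rightarrow> (\<lambda>t. A u + y - t) ` T)}
        \<le> 1 * infdist 0 ((\<lambda>t. A u + y - t) ` T)"
  proof (rule infdist_le_scaled_infdist[OF _ ne])
    fix r assume "r \<in> (\<lambda>t. A u + y - t) ` T"
    then obtain t where "t \<in> T" and r: "r = A u + y - t" by blast
    then have "(u, t - A u) \<in> {x. 0 \<in> (case x of (u, y) \<Rightarrow> (\<lambda>t. A u + y - t) ` T)}"
      by force
    moreover have "dist (u, y) (u, t - A u) = 1 * dist 0 r"
      by (simp add: r dist_Pair_Pair dist_norm norm_minus_commute algebra_simps)
    ultimately show "\<exists>a\<in>{x. 0 \<in> (case x of (u, y) \<Rightarrow> (\<lambda>t. A u + y - t) ` T)}.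
                      dist (u, y) a \<le> 1 * dist 0 r"
      by (metis order_refl)
  qed simp
  then show "infdist z {x. 0 \<in> (case x of (u, y) \<Rightarrow> (\<lambda>t. A u + y - t) ` T)}
             \<le> 1 * infdist 0 (case z of (u, y) \<Rightarrow> (\<lambda>t. A u + y - t) ` T)"
    by (simp add: z)
qed simp_all

lemma metrically_subregular_local_error_bound:
  fixes A :: "'a::real_normed_vector \<Rightarrow> 'b::real_normed_vector"
  assumes "metrically_subregular (\<lambda>u. (\<lambda>t. A u - t) ` T) 0 0"
  obtains e \<kappa> where "e > 0" and "\<kappa> > 0"
    and "\<And>u y. norm u < e \<Longrightarrow> A u + y \<in> T \<Longrightarrow> infdist u {v. A v \<in> T} \<le> \<kappa> * norm y"
proof -
  obtain W \<kappa> where "open W" "0 \<in> W" "\<kappa> > 0"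
    and W: "\<forall>u\<in>W. (\<lambda>t. A u - t) ` T \<noteq> {} \<longrightarrow>
          infdist u {x. 0 \<in> (\<lambda>t. A x - t) ` T} \<le> \<kappa> * infdist 0 ((\<lambda>t. A u - t) ` T)"
    using assms unfolding metrically_subregular_def by blast
  obtain e where "e > 0" and e: "ball 0 e \<subseteq> W"
    using \<open>open W\<close> \<open>0 \<in> W\<close> open_contains_ball by blast
  have L: "{x. 0 \<in> (\<lambda>t. A x - t) ` T} = {v. A v \<in> T}" by force
  have "infdist u {v. A v \<in> T} \<le> \<kappa> * norm y" if "norm u < e" and "A u + y \<in> T" for u y
  proof -
    have "- y \<in> (\<lambda>t. A u - t) ` T"
      using \<open>A u + y \<in> T\<close> by (auto intro: image_eqI[of _ _ "A u + y"])
    then have ne: "(\<lambda>t. A u - t) ` T \<noteq> {}" and "infdist 0 ((\<lambda>t. A u - t) ` T) \<le> norm y"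
      using infdist_le[of "- y" _ 0] by auto
    moreover have "u \<in> W" using e \<open>norm u < e\<close> by auto
    ultimately show ?thesis
      using W \<open>\<kappa> > 0\<close> unfolding L by (meson mult_left_mono order_trans less_imp_le)
  qed
  with \<open>e > 0\<close> \<open>\<kappa> > 0\<close> show ?thesis using that by blast
qed

lemma linear_cone_error_bound:
  fixes A :: "'a::real_normed_vector \<Rightarrow> 'b::real_normed_vector"
  assumes "linear A"
    and cone: "\<And>x c. x \<in> T \<Longrightarrow> c > 0 \<Longrightarrow> c *\<^sub>R x \<in> T"
    and subreg: "metrically_subregular (\<lambda>u. (\<lambda>t. A u - t) ` T) 0 0"
  obtains \<kappa> where "\<kappa> > 0"
    and "\<And>u y. A u + y \<in> T \<Longrightarrow> infdist u {v. A v \<in> T} \<le> \<kappa> * norm y"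
proof -
  interpret linear A by fact
  obtain e \<kappa> where "e > 0" "\<kappa> > 0" and local: "\<And>u y. norm u < e \<Longrightarrow> A u + y \<in> T \<Longrightarrow>
      infdist u {v. A v \<in> T} \<le> \<kappa> * norm y"
    using metrically_subregular_local_error_bound[OF subreg] by blast
  have "0 \<in> {v. A v \<in> T}"
    using subreg unfolding metrically_subregular_def by force
  then have ne: "{v. A v \<in> T} \<noteq> {}" by blast
  \<comment> \<open>Since \<open>T\<close> is a cone, the local bound at \<open>l u\<close> rescales to a bound at \<open>u\<close>.\<close>
  have "infdist u {v. A v \<in> T} \<le> \<kappa> * norm y" if "A u + y \<in> T" for u y
  proof -
    define l where "l = e / (norm u + 1)"
    have "l > 0" using \<open>e > 0\<close> by (simp add: l_def add_nonneg_pos)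
    have "norm (l *\<^sub>R u) = e * (norm u / (norm u + 1))"
      using \<open>l > 0\<close> \<open>e > 0\<close> by (simp add: l_def)
    also have "\<dots> < e" using \<open>e > 0\<close> by (simp add: add_nonneg_pos mult_less_cancel_left1 divide_less_eq)
    finally have "norm (l *\<^sub>R u) < e" .
    moreover have "A (l *\<^sub>R u) + l *\<^sub>R y \<in> T"
      using cone[OF that \<open>l > 0\<close>] by (simp add: scale scaleR_add_right)
    ultimately have bound: "infdist (l *\<^sub>R u) {v. A v \<in> T} \<le> \<kappa> * (l * norm y)"
      using local \<open>l > 0\<close> by fastforce
    have "infdist u {v. A v \<in> T} \<le> (1 / l) * infdist (l *\<^sub>R u) {v. A v \<in> T}"
    proof (rule infdist_le_scaled_infdist[OF _ ne])
      fix v assume "v \<in> {v. A v \<in> T}"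
      then have "(1 / l) *\<^sub>R v \<in> {v. A v \<in> T}" using cone \<open>l > 0\<close> by (simp add: scale)
      moreover have "dist u ((1 / l) *\<^sub>R v) = (1 / l) * dist (l *\<^sub>R u) v"
      proof -
        have "u - (1 / l) *\<^sub>R v = (1 / l) *\<^sub>R (l *\<^sub>R u - v)"
          using \<open>l > 0\<close> by (simp add: scaleR_diff_right)
        then show ?thesis using \<open>l > 0\<close> by (simp add: dist_norm)
      qed
      ultimately show "\<exists>a\<in>{v. A v \<in> T}. dist u a \<le> (1 / l) * dist (l *\<^sub>R u) v"
        by (metis order_refl)
    qed (use \<open>l > 0\<close> in simp)
    also have "\<dots> \<le> (1 / l) * (\<kappa> * (l * norm y))"
      using mult_left_mono[OF bound, of "1 / l"] \<open>l > 0\<close> by simp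
    also have "\<dots> = \<kappa> * norm y" using \<open>l > 0\<close> by simp
    finally show ?thesis .
  qed
  then show ?thesis using that \<open>\<kappa> > 0\<close> by blast
qed

lemma bdd_below_linear_plus_half_sq_norm:
  fixes A :: "'a::real_inner \<Rightarrow> 'b::real_normed_vector"
  assumes ne: "{v. A v \<in> T} \<noteq> {}"
    and polar: "\<And>v. A v \<in> T \<Longrightarrow> 0 \<le> inner g v"
    and error_bound: "\<And>u y. A u + y \<in> T \<Longrightarrow> infdist u {v. A v \<in> T} \<le> \<kappa> * norm y"
  shows "bdd_below ((\<lambda>(u, y). inner g u + (1/2) * (norm y)\<^sup>2) ` {(u, y). A u + y \<in> T})"
proof (rule bdd_belowI2)
  fix p assume "p \<in> {(u, y). A u + y \<in> T}"
  then obtain u y where p: "p = (u, y)" and "A u + y \<in> T" by blast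
  then have "infdist u {v. A v \<in> T} < \<kappa> * norm y + 1"
    using error_bound by fastforce
  then obtain v where "A v \<in> T" and uv: "norm (u - v) < \<kappa> * norm y + 1"
    using infdist_lessE[OF ne] by (metis dist_norm mem_Collect_eq)
  have "- (norm g * norm (u - v)) \<le> inner g (u - v)"
    using Cauchy_Schwarz_ineq2[of g "u - v"] by linarith
  moreover have "norm g * norm (u - v) \<le> norm g * (\<kappa> * norm y + 1)"
    using uv by (simp add: mult_left_mono)
  moreover have "inner g u = inner g v + inner g (u - v)" by (simp add: inner_diff_right)
  ultimately have "- (norm g * (\<kappa> * norm y + 1)) \<le> inner g u"
    using polar[OF \<open>A v \<in> T\<close>] by linarith
  moreover have "- (norm g * (\<kappa> * norm y + 1)) + (1/2) * (norm y)\<^sup>2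
      = - ((norm g * \<kappa>)\<^sup>2 / 2) - norm g + (1/2) * (norm y - norm g * \<kappa>)\<^sup>2"
    by (simp add: power2_eq_square algebra_simps)
  moreover have "0 \<le> (norm y - norm g * \<kappa>)\<^sup>2" by simp
  ultimately show "- ((norm g * \<kappa>)\<^sup>2 / 2) - norm g
      \<le> (case p of (u, y) \<Rightarrow> inner g u + (1/2) * (norm y)\<^sup>2)"
    unfolding p case_prod_conv by linarith
qed

lemma GDERIV_linear_plus_half_sq_norm:
  "GDERIV (\<lambda>(u, y). inner g u + (1/2) * (norm y)\<^sup>2) (ub, yb) :> (g, yb)"
proof -
  have eq: "(\<lambda>(u, y). inner g u + (1/2) * (norm y)\<^sup>2)
      = (\<lambda>p. inner g (fst p) + (1/2) * inner (snd p) (snd p))"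
    by (auto simp: power2_norm_eq_inner)
  show ?thesis
    unfolding eq gderiv_def
    by (rule derivative_eq_intros refl)+ (auto simp: inner_prod_def inner_commute)
qed

lemma tangent_cone_slack_constraint:
  assumes "linear A" and "d \<in> tangent_cone T (A ub + yb)"
  shows "(h, d - A h) \<in> tangent_cone {(u, y). A u + y \<in> T} (ub, yb)"
proof -
  interpret linear A by fact
  obtain t e where t: "\<forall>k. t k > 0" "t \<longlonglongrightarrow> 0" and "e \<longlonglongrightarrow> d"
    and mem: "\<forall>k. A ub + yb + t k *\<^sub>R e k \<in> T"
    using assms(2) unfolding tangent_cone_def by blast
  have "(\<lambda>k. (h, e k - A h)) \<longlonglongrightarrow> (h, d - A h)"
    by (intro tendsto_intros \<open>e \<longlonglongrightarrow> d\<close>)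
  moreover have "(ub, yb) + t k *\<^sub>R (h, e k - A h) \<in> {(u, y). A u + y \<in> T}" for k
  proof -
    have "A (ub + t k *\<^sub>R h) + (yb + t k *\<^sub>R (e k - A h)) = A ub + yb + t k *\<^sub>R e k"
      by (simp add: add scale algebra_simps)
    then have "A (ub + t k *\<^sub>R h) + (yb + t k *\<^sub>R (e k - A h)) \<in> T" using mem by metis
    then show ?thesis by simp
  qed
  ultimately show ?thesis
    using t unfolding tangent_cone_def by blast
qed

lemma b_stationary_slack_program_multiplier:
  fixes A :: "'a::euclidean_space \<Rightarrow> 'b::euclidean_space"
  assumes "linear A"
    and bstat: "b_stationary (\<lambda>(u, y). inner g u + (1/2) * (norm y)\<^sup>2) {(u, y). A u + y \<in> T} (ub, yb)"
  shows "\<exists>w \<in> regular_normal_cone T (A ub + yb). g + adjoint A w = 0 \<and> yb + w = 0"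
proof -
  have normal: "inner (- (g, yb)) (h, d - A h) \<le> 0"
    if "d \<in> tangent_cone T (A ub + yb)" for h d
    using b_stationary_neg_gradient_in_normal_cone[OF bstat GDERIV_linear_plus_half_sq_norm]
      tangent_cone_slack_constraint[OF \<open>linear A\<close> that]
    unfolding regular_normal_cone_def polar_cone_def by blast
  have "A ub + yb \<in> T" using bstat by (simp add: b_stationary_def)
  then have T0: "0 \<in> tangent_cone T (A ub + yb)" by (rule zero_in_tangent_cone)
  \<comment> \<open>The direction \<open>(h, - A h)\<close> can be taken for every \<open>h\<close>, hence equality.\<close>
  have "inner h (adjoint A yb - g) \<le> 0" for h
    using normal[OF T0, of h] adjoint_clauses(1)[OF \<open>linear A\<close>, of h yb]
    by (simp add: inner_prod_def inner_diff_right inner_commute)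
  from this[of "adjoint A yb - g"] have g: "g = adjoint A yb"
    by (metis inner_gt_zero_iff not_le right_minus_eq)
  have "- yb \<in> regular_normal_cone T (A ub + yb)"
    using normal[of _ 0] \<open>linear A\<close>
    by (simp add: regular_normal_cone_def polar_cone_def inner_prod_def linear_0)
  moreover have "adjoint A (- yb) = - adjoint A yb"
    using adjoint_linear[OF \<open>linear A\<close>] by (simp add: linear_neg)
  ultimately show ?thesis using g by (intro bexI[of _ "- yb"]) auto
qed

theorem lemma4p6:
  fixes f :: "'a::euclidean_space \<Rightarrow> real" and gf :: "'a \<Rightarrow> 'a"
    and P :: "'a \<Rightarrow> 'b::euclidean_space" and DP :: "'a \<Rightarrow> ('a \<Rightarrow>\<^sub>L 'b)"
    and D :: "'b set" and zb :: 'a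
  assumes f_grad: "\<And>z. GDERIV f z :> gf z"
    and gf_cont: "continuous_on UNIV gf"
    and P_deriv: "\<And>z. (P has_derivative blinfun_apply (DP z)) (at z)"
    and DP_cont: "continuous_on UNIV DP"
    and D_closed: "closed D"
    and Bstat: "b_stationary f {z. P z \<in> D} zb"
    and GGCQ: "regular_normal_cone {z. P z \<in> D} zb
                 = polar_cone (lin_tangent_cone (blinfun_apply (DP zb)) D (P zb))"
    and subreg: "metrically_subregular
                   (\<lambda>u. (\<lambda>t. blinfun_apply (DP zb) u - t) ` tangent_cone D (P zb)) 0 0"
  shows "(\<forall>ub yb. blinfun_apply (DP zb) ub + yb \<in> tangent_cone D (P zb) \<longrightarrow>
            metrically_subregular
              (\<lambda>(u, y). (\<lambda>t. blinfun_apply (DP zb) u + y - t) ` tangent_cone D (P zb))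
              (ub, yb) 0)
       \<and> bdd_below ((\<lambda>(u, y). inner (gf zb) u + (1/2) * (norm y)\<^sup>2) `
                     {(u, y). blinfun_apply (DP zb) u + y \<in> tangent_cone D (P zb)})
       \<and> (\<forall>ub yb. b_stationary (\<lambda>(u, y). inner (gf zb) u + (1/2) * (norm y)\<^sup>2)
                     {(u, y). blinfun_apply (DP zb) u + y \<in> tangent_cone D (P zb)} (ub, yb)
            \<longrightarrow> (\<exists>w \<in> regular_normal_cone (tangent_cone D (P zb)) (blinfun_apply (DP zb) ub + yb).
                   gf zb + adjoint (blinfun_apply (DP zb)) w = 0 \<and> yb + w = 0))"
proof -
  let ?A = "blinfun_apply (DP zb)"
  let ?T = "tangent_cone D (P zb)"
  have lin: "linear ?A" by (simp add: blinfun.bounded_linear_right bounded_linear.linear)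
  have cone: "\<And>x c. x \<in> ?T \<Longrightarrow> c > 0 \<Longrightarrow> c *\<^sub>R x \<in> ?T" by (rule tangent_cone_scaleR)
  have "- gf zb \<in> polar_cone (lin_tangent_cone ?A D (P zb))"
    using b_stationary_neg_gradient_in_normal_cone[OF Bstat f_grad] GGCQ by simp
  then have polar: "\<And>v. ?A v \<in> ?T \<Longrightarrow> 0 \<le> inner (gf zb) v"
    by (auto simp: polar_cone_def lin_tangent_cone_def)
  obtain \<kappa> where error_bound: "\<And>u y. ?A u + y \<in> ?T \<Longrightarrow> infdist u {v. ?A v \<in> ?T} \<le> \<kappa> * norm y"
    using linear_cone_error_bound[OF lin cone subreg] by blast
  have "P zb \<in> D" using Bstat by (simp add: b_stationary_def)
  then have "0 \<in> {v. ?A v \<in> ?T}" by (simp add: zero_in_tangent_cone)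
  then have feasible: "{v. ?A v \<in> ?T} \<noteq> {}" by blast
  show ?thesis
  proof (intro conjI allI impI)
    fix ub yb
    assume "?A ub + yb \<in> ?T"
    then show "metrically_subregular (\<lambda>(u, y). (\<lambda>t. ?A u + y - t) ` ?T) (ub, yb) 0"
      by (rule metrically_subregular_slack_residual)
  next
    show "bdd_below ((\<lambda>(u, y). inner (gf zb) u + (1/2) * (norm y)\<^sup>2) ` {(u, y). ?A u + y \<in> ?T})"
      by (rule bdd_below_linear_plus_half_sq_norm[OF feasible polar error_bound])
  next
    fix ub yb
    assume "b_stationary (\<lambda>(u, y). inner (gf zb) u + (1/2) * (norm y)\<^sup>2) {(u, y). ?A u + y \<in> ?T} (ub, yb)"
    then show "\<exists>w \<in> regular_normal_cone ?T (?A ub + yb). gf zb + adjoint ?A w = 0 \<and> yb + w = 0"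
      by (rule b_stationary_slack_program_multiplier[OF lin])
  qed
qed

end
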